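(* Let $\mu>1/2$, $0<\nu<1/2$, $M>0$, and let $g_1,g_2\in X$ with $\|g_i\|_\infty\le M$; let $F_1,F_2$ be the corresponding functions $F[g_1],F[g_2]$. Then there is a constant $c(\mu,\nu,M)$ depending only on $\mu,\nu,M$ such that $$|F_1'(x)-F_2'(x)|\le c(\mu,\nu,M)\|g_2-g_1\|_\infty\frac{1}{|x|^{2\nu}(x^2+1)^{\mu-\nu}}\quad(x\ne0),$$ $$|F_1(x)-F_2(x)|\le c(\mu,\nu,M)\|g_2-g_1\|_\infty |x|^{1-2\mu}\quad(|x|\ge1),\qquad |F_1(x)-F_2(x)|\le c(\mu,\nu,M)\|g_2-g_1\|_\infty\quad(x\in\mathbb{R}).$$
   Context: $X=\{g\in C(\mathbb{R})\cap L^\infty(\mathbb{R})\text{ real}:\ \lim_{x\to\pm\infty}g(x)=0\}$ with sup norm. For $g\in X$: $h^{-1}(0)=0$, $(h^{-1})'(x)=|x|^{\nu-1}(x^2+1)^{(\mu-\nu)/2}e^{g(x)}$; $\kappa>0$ with $\int_{\mathbb{R}}\frac{\kappa}{x h^{-1}(x)(h^{-1})'(x)}dx=(\mu-\nu)\pi$; $F=F[g]$ is the continuous function with $F'(x)=\frac{\kappa}{xh^{-1}(x)(h^{-1})'(x)}$ ($x\neq0$) and $F(+\infty)=0$ (so $F(-\infty)=-(\mu-\nu)\pi$). *)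

theory Defs
  imports "HOL-Analysis.Analysis"
begin

definition inX :: "(real \<Rightarrow> real) \<Rightarrow> bool" where
  "inX g \<longleftrightarrow> continuous_on UNIV g \<and> bounded (range g)
     \<and> (g \<longlongrightarrow> 0) at_top \<and> (g \<longlongrightarrow> 0) at_bot"

definition supnorm :: "(real \<Rightarrow> real) \<Rightarrow> real" where
  "supnorm g = (SUP x. \<bar>g x\<bar>)"

definition hinvd :: "real \<Rightarrow> real \<Rightarrow> (real \<Rightarrow> real) \<Rightarrow> real \<Rightarrow> real" where
  "hinvd \<mu> \<nu> g x = \<bar>x\<bar> powr (\<nu> - 1) * (x\<^sup>2 + 1) powr ((\<mu> - \<nu>) / 2) * exp (g x)"

definition hinv :: "real \<Rightarrow> real \<Rightarrow> (real \<Rightarrow> real) \<Rightarrow> real \<Rightarrow> real" where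
  "hinv \<mu> \<nu> g x = (LBINT t=0..x. hinvd \<mu> \<nu> g t)"

text \<open>kappa chosen so that the integral of F' over the real line equals (mu-nu) pi.\<close>
definition kappa :: "real \<Rightarrow> real \<Rightarrow> (real \<Rightarrow> real) \<Rightarrow> real" where
  "kappa \<mu> \<nu> g = (\<mu> - \<nu>) * pi / (LBINT x. 1 / (x * hinv \<mu> \<nu> g x * hinvd \<mu> \<nu> g x))"

definition Fd :: "real \<Rightarrow> real \<Rightarrow> (real \<Rightarrow> real) \<Rightarrow> real \<Rightarrow> real" where
  "Fd \<mu> \<nu> g x = kappa \<mu> \<nu> g / (x * hinv \<mu> \<nu> g x * hinvd \<mu> \<nu> g x)"

text \<open>F with F(+infinity) = 0: F(x) = - integral of F' over (x, infinity).\<close>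
definition FF :: "real \<Rightarrow> real \<Rightarrow> (real \<Rightarrow> real) \<Rightarrow> real \<Rightarrow> real" where
  "FF \<mu> \<nu> g x = - (LBINT t:{x<..}. Fd \<mu> \<nu> g t)"

end

theory Submission
  imports Defs "HOL-Real_Asymp.Real_Asymp"
begin

(* Write h^{-1}(x) = int_0^x w(t) e^{g t} dt with the weight
   w(t) = |t|^(nu-1) (t^2+1)^((mu-nu)/2), and let W(b) = int_0^b w.  For |g| <= M:
   (1) x h^{-1}(x) is comparable to |x| W(|x|) within factors e^{+-M}, and it moves
       by at most e^M delta |x| W(|x|) when g moves by delta in sup norm;
   (2) hence the denominator  den g x = x h^{-1}(x) (h^{-1})'(x)  is comparable to
       den0 x = |x| W(|x|) w(x) and is Lipschitz in g relative to den0;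
   (3) 1/den0 is dominated by a multiple of the rate function
       rate x = 1 / (|x|^(2 nu) (x^2+1)^(mu-nu)), which is integrable with tails
       int_{|t|>b} rate = O(b^(1-2 mu));
   (4) consequently kappa = (mu-nu) pi / int 1/den and F' = kappa / den are Lipschitz
       in g, with |F_1' - F_2'| <= C delta rate, and integrating this bound over the
       half-lines {x<..} and {..x} (using int F' = (mu-nu) pi) bounds F_1 - F_2. *)

section \<open>General facts on Lebesgue integrals over the real line\<close>

lemma einterval_0_real: "einterval 0 (ereal b) = {0<..<b}"
  by (auto simp: einterval_def zero_ereal_def)

lemma powr_integral_0:
  fixes p b :: real
  assumes p: "p > -1" and b: "b > 0"
  shows "set_integrable lborel {0<..<b} (\<lambda>t. t powr p)"
    "(LBINT t:{0<..<b}. t powr p) = b powr (p+1) / (p+1)"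
proof -
  let ?F = "\<lambda>t::real. t powr (p+1) / (p+1)"
  have h1: "0 < ereal b" using b by (simp add: zero_ereal_def)
  have h2: "(?F has_real_derivative x powr p) (at x)" if x: "0 < ereal x" "ereal x < ereal b" for x
  proof -
    from x have "x > 0" by (simp add: zero_ereal_def)
    then show ?thesis
      using DERIV_cdivide[OF has_real_derivative_powr[of x "p+1"], of "p+1"] p by simp
  qed
  have h3: "isCont (\<lambda>t. t powr p) x" if x: "0 < ereal x" "ereal x < ereal b" for x
  proof -
    from x have "x > 0" by (simp add: zero_ereal_def)
    then show ?thesis by (auto intro!: continuous_intros)
  qed
  have h4: "AE x in lborel. 0 < ereal x \<longrightarrow> ereal x < ereal b \<longrightarrow> 0 \<le> x powr p" by simp
  have h5: "((?F \<circ> real_of_ereal) \<longlongrightarrow> 0) (at_right 0)"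
      unfolding zero_ereal_def ereal_tendsto_simps1
      using p by (auto intro!: tendsto_eq_intros tendsto_zero_powrI
        simp: eventually_at_right_less[THEN eventually_mono])
  have h6: "((?F \<circ> real_of_ereal) \<longlongrightarrow> b powr (p+1) / (p+1)) (at_left (ereal b))"
      unfolding ereal_tendsto_simps1
      using p b by (auto intro!: tendsto_eq_intros)
  note * = interval_integral_FTC_nonneg[OF h1 h2 h3 h4 h5 h6]
  then show "set_integrable lborel {0<..<b} (\<lambda>t. t powr p)"
    "(LBINT t:{0<..<b}. t powr p) = b powr (p+1) / (p+1)"
    using b by (simp_all add: einterval_0_real interval_lebesgue_integral_def zero_ereal_def)
qed

lemma powr_integral_tail:
  fixes p b :: real
  assumes p: "p < -1" and b: "b > 0"
  shows "set_integrable lborel {b<..} (\<lambda>t. t powr p)"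
    "(LBINT t:{b<..}. t powr p) = - (b powr (p+1) / (p+1))"
proof -
  let ?F = "\<lambda>t::real. t powr (p+1) / (p+1)"
  have h1: "ereal b < \<infinity>" by simp
  have h2: "(?F has_real_derivative x powr p) (at x)" if x: "ereal b < ereal x" "ereal x < \<infinity>" for x
  proof -
    from x have "x > 0" using b by simp
    then show ?thesis
      using DERIV_cdivide[OF has_real_derivative_powr[of x "p+1"], of "p+1"] p by simp
  qed
  have h3: "isCont (\<lambda>t. t powr p) x" if x: "ereal b < ereal x" "ereal x < \<infinity>" for x
  proof -
    from x have "x > 0" using b by simp
    then show ?thesis by (auto intro!: continuous_intros)
  qed
  have h4: "AE x in lborel. ereal b < ereal x \<longrightarrow> ereal x < \<infinity> \<longrightarrow> 0 \<le> x powr p" by simp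
  have h5: "((?F \<circ> real_of_ereal) \<longlongrightarrow> b powr (p+1) / (p+1)) (at_right (ereal b))"
      unfolding ereal_tendsto_simps1
      using p b by (auto intro!: tendsto_eq_intros)
  have h6: "((?F \<circ> real_of_ereal) \<longlongrightarrow> 0) (at_left \<infinity>)"
      unfolding ereal_tendsto_simps1
      using p by real_asymp
  note * = interval_integral_FTC_nonneg[OF h1 h2 h3 h4 h5 h6]
  have e: "einterval (ereal b) \<infinity> = {b<..}" by (auto simp: einterval_def)
  from * show "set_integrable lborel {b<..} (\<lambda>t. t powr p)"
    "(LBINT t:{b<..}. t powr p) = - (b powr (p+1) / (p+1))"
    by (simp_all add: e interval_lebesgue_integral_def)
qed

lemma set_integrable_reflect:
  fixes f :: "real \<Rightarrow> real"
  assumes "set_integrable lborel S f"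
  shows "set_integrable lborel {x. -x \<in> S} (\<lambda>x. f (-x))"
proof -
  have "integrable lborel (\<lambda>x. indicator S (0 + (-1) * x) *\<^sub>R f (0 + (-1) * x))"
    using lborel_integrable_real_affine[of "\<lambda>x. indicator S x *\<^sub>R f x" "-1" 0] assms
    unfolding set_integrable_def by simp
  then show ?thesis unfolding set_integrable_def
    by (simp add: indicator_def)
qed

lemma set_integral_subset_mono:
  fixes f :: "real \<Rightarrow> real"
  assumes "set_integrable lborel B f" "A \<in> sets lborel" "A \<subseteq> B" "\<And>t. t \<in> B \<Longrightarrow> 0 \<le> f t"
  shows "(LBINT t:A. f t) \<le> (LBINT t:B. f t)"
proof -
  have "set_integrable lborel A f" by (rule set_integrable_subset[OF assms(1-3)])
  then show ?thesis using assms unfolding set_lebesgue_integral_def set_integrable_def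
    by (intro integral_mono) (auto simp: indicator_def)
qed

lemma set_integral_diff_le:
  fixes f1 f2 h :: "real \<Rightarrow> real" and c :: real
  assumes i1: "integrable lborel f1" and i2: "integrable lborel f2" and ih: "integrable lborel h"
    and S: "S \<in> sets lborel" and b: "\<And>t. \<bar>f1 t - f2 t\<bar> \<le> c * h t"
  shows "\<bar>(LBINT t:S. f1 t) - (LBINT t:S. f2 t)\<bar> \<le> c * (LBINT t:S. h t)"
proof -
  have j1: "integrable lborel (\<lambda>t. indicator S t *\<^sub>R f1 t)" using S i1 by (rule integrable_mult_indicator)
  have j2: "integrable lborel (\<lambda>t. indicator S t *\<^sub>R f2 t)" using S i2 by (rule integrable_mult_indicator)
  have jh: "integrable lborel (\<lambda>t. indicator S t *\<^sub>R (c * h t))"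
    using S integrable_mult_right[OF ih, of c] by (rule integrable_mult_indicator)
  have "\<bar>(LBINT t:S. f1 t) - (LBINT t:S. f2 t)\<bar>
      = \<bar>LBINT t. indicator S t *\<^sub>R f1 t - indicator S t *\<^sub>R f2 t\<bar>"
    unfolding set_lebesgue_integral_def using j1 j2 by simp
  also have "\<dots> \<le> (LBINT t. indicator S t *\<^sub>R (c * h t))"
  proof (rule integral_abs_bound_integral)
    show "integrable lborel (\<lambda>t. indicator S t *\<^sub>R f1 t - indicator S t *\<^sub>R f2 t)"
      using j1 j2 by simp
    show "integrable lborel (\<lambda>t. indicator S t *\<^sub>R (c * h t))" by (rule jh)
    fix t :: real
    show "\<bar>indicator S t *\<^sub>R f1 t - indicator S t *\<^sub>R f2 t\<bar> \<le> indicator S t *\<^sub>R (c * h t)"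
      using b[of t] by (simp add: indicator_def)
  qed
  also have "\<dots> = c * (LBINT t:S. h t)"
    unfolding set_lebesgue_integral_def by (simp add: mult.left_commute)
  finally show ?thesis .
qed

section \<open>Elementary perturbation inequalities\<close>

lemma exp_lipschitz:
  fixes a b M :: real
  assumes "\<bar>a\<bar> \<le> M" "\<bar>b\<bar> \<le> M"
  shows "\<bar>exp a - exp b\<bar> \<le> exp M * \<bar>a - b\<bar>"
proof -
  have key: "exp u - exp v \<le> exp u * (u - v)" if "v \<le> u" for u v :: real
  proof -
    have "1 + (v - u) \<le> exp (v - u)" by (rule exp_ge_add_one_self)
    then have "exp u * (1 + (v - u)) \<le> exp u * exp (v - u)" by simp
    also have "exp u * exp (v - u) = exp v" by (simp add: exp_add[symmetric])
    finally show ?thesis by (simp add: algebra_simps)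
  qed
  show ?thesis
  proof (cases "b \<le> a")
    case True
    have "exp a - exp b \<le> exp a * (a - b)" using key[OF True] .
    also have "\<dots> \<le> exp M * (a - b)" using True assms by (intro mult_right_mono) auto
    finally show ?thesis using True by simp
  next
    case False
    then have "a \<le> b" by simp
    have "exp b - exp a \<le> exp b * (b - a)" using key[OF \<open>a \<le> b\<close>] .
    also have "\<dots> \<le> exp M * (b - a)" using \<open>a \<le> b\<close> assms by (intro mult_right_mono) auto
    finally show ?thesis using \<open>a \<le> b\<close> by (simp add: abs_minus_commute)
  qed
qed

lemma product_perturbation:
  fixes h1 h2 a1 a2 E d V W :: real
  assumes "\<bar>h1 - h2\<bar> \<le> E*d*V" "0 \<le> h2" "h2 \<le> E*V" "0 \<le> a1" "a1 \<le> E*W"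
    "\<bar>a1 - a2\<bar> \<le> E*d*W" "0 \<le> E" "0 \<le> V" "0 \<le> W"
  shows "\<bar>h1*a1 - h2*a2\<bar> \<le> 2*E*E*d*V*W"
proof -
  have eq: "h1*a1 - h2*a2 = (h1-h2)*a1 + h2*(a1-a2)" by (simp add: algebra_simps)
  have 1: "\<bar>(h1-h2)*a1\<bar> \<le> (E*d*V)*(E*W)"
    unfolding abs_mult using assms by (intro mult_mono) auto
  have 2: "\<bar>h2*(a1-a2)\<bar> \<le> (E*V)*(E*d*W)"
    unfolding abs_mult using assms by (intro mult_mono) auto
  have "\<bar>h1*a1 - h2*a2\<bar> \<le> \<bar>(h1-h2)*a1\<bar> + \<bar>h2*(a1-a2)\<bar>" unfolding eq by (rule abs_triangle_ineq)
  also have "\<dots> \<le> (E*d*V)*(E*W) + (E*V)*(E*d*W)" using 1 2 by linarith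
  also have "\<dots> = 2*E*E*d*V*W" by (simp add: algebra_simps)
  finally show ?thesis .
qed

lemma reciprocal_perturbation:
  fixes a Q p1 p2 D :: real
  assumes a: "0 < a" and Q: "0 < Q" and p1: "a*Q \<le> p1" and p2: "a*Q \<le> p2" and d: "\<bar>p1 - p2\<bar> \<le> D*Q"
  shows "\<bar>1/p1 - 1/p2\<bar> \<le> D / (a*a*Q)"
proof -
  have aQ: "0 < a*Q" using a Q by simp
  have pp1: "0 < p1" "0 < p2" using aQ p1 p2 by linarith+
  have "\<bar>1/p1 - 1/p2\<bar> = \<bar>p1 - p2\<bar> / (p1*p2)"
    using pp1 by (simp add: field_simps abs_minus_commute)
  also have "\<dots> \<le> (D*Q) / (p1*p2)"
    using pp1 d by (intro divide_right_mono) auto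
  also have "\<dots> \<le> (D*Q) / ((a*Q)*(a*Q))"
  proof (rule divide_left_mono)
    show "0 \<le> D*Q" using d abs_ge_zero order_trans by blast
    show "(a*Q)*(a*Q) \<le> p1*p2" using aQ p1 p2 by (intro mult_mono) auto
    show "0 < p1*p2 * ((a*Q)*(a*Q))" using pp1 aQ by simp
  qed
  also have "\<dots> = D / (a*a*Q)" using a Q by (simp add: field_simps)
  finally show ?thesis .
qed

lemma sq1_pos[simp]: "0 < (x::real)\<^sup>2 + 1"
  by (simp add: add_nonneg_pos)

lemma sq1_ne0[simp]: "(x::real)\<^sup>2 + 1 \<noteq> 0"
  using sq1_pos[of x] by linarith

lemma sq_powr: "(x::real) \<noteq> 0 \<Longrightarrow> (x\<^sup>2) powr b = \<bar>x\<bar> powr (2 * b)"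
proof -
  assume x: "x \<noteq> 0"
  have eq: "x\<^sup>2 = \<bar>x\<bar> powr 2" using x by (simp add: powr_numeral)
  have "(x\<^sup>2) powr b = (\<bar>x\<bar> powr 2) powr b" by (simp only: eq)
  also have "\<dots> = \<bar>x\<bar> powr (2 * b)" by (rule powr_powr)
  finally show ?thesis .
qed

section \<open>Integrals of a weight against \<open>exp g\<close> for bounded \<open>g\<close>\<close>

definition admissible :: "real \<Rightarrow> (real \<Rightarrow> real) \<Rightarrow> bool" where
  "admissible M g \<longleftrightarrow> g \<in> borel_measurable borel \<and> (\<forall>t. \<bar>g t\<bar> \<le> M)"

lemma admissibleD:
  assumes "admissible M g"
  shows "g \<in> borel_measurable borel" "\<bar>g t\<bar> \<le> M"
  using assms unfolding admissible_def by auto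

lemma admissible_nonneg: "admissible M g \<Longrightarrow> 0 \<le> M"
  using abs_ge_zero order_trans unfolding admissible_def by blast

lemma weighted_exp_integral_bounds:
  fixes w g :: "real \<Rightarrow> real" and M :: real
  assumes A: "A \<in> sets lborel" and wi: "set_integrable lborel A w"
    and wm: "w \<in> borel_measurable borel" and w0: "\<And>t. t \<in> A \<Longrightarrow> 0 \<le> w t"
    and gm: "g \<in> borel_measurable borel" and gM: "\<And>t. \<bar>g t\<bar> \<le> M"
  shows "set_integrable lborel A (\<lambda>t. w t * exp (g t))"
    "exp (-M) * (LBINT t:A. w t) \<le> (LBINT t:A. w t * exp (g t))"
    "(LBINT t:A. w t * exp (g t)) \<le> exp M * (LBINT t:A. w t)"
proof -
  have wi2: "set_integrable lborel A (\<lambda>t. exp M * w t)"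
    using wi by simp
  show i: "set_integrable lborel A (\<lambda>t. w t * exp (g t))"
  proof (rule set_integrable_bound[OF wi2])
    show "set_borel_measurable lborel A (\<lambda>t. w t * exp (g t))"
      unfolding set_borel_measurable_def using A wm gm by measurable
    show "AE x in lborel. x \<in> A \<longrightarrow> norm (w x * exp (g x)) \<le> norm (exp M * w x)"
    proof (rule AE_I2, intro impI)
      fix x assume "x \<in> A"
      then have "0 \<le> w x" by (rule w0)
      moreover have "exp (g x) \<le> exp M" using gM[of x] by simp
      ultimately have "w x * exp (g x) \<le> w x * exp M" by (intro mult_left_mono) auto
      then show "norm (w x * exp (g x)) \<le> norm (exp M * w x)"
        using \<open>0 \<le> w x\<close> by (simp add: abs_mult mult.commute)
    qed
  qed
  have wi3: "set_integrable lborel A (\<lambda>t. exp (-M) * w t)"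
    using wi by simp
  have "(LBINT t:A. exp (-M) * w t) \<le> (LBINT t:A. w t * exp (g t))"
  proof (rule set_integral_mono[OF wi3 i])
    fix t assume "t \<in> A"
    then have "0 \<le> w t" by (rule w0)
    moreover have "exp (-M) \<le> exp (g t)" using gM[of t] by simp
    ultimately show "exp (-M) * w t \<le> w t * exp (g t)"
      by (simp add: mult.commute mult_left_mono)
  qed
  then show "exp (-M) * (LBINT t:A. w t) \<le> (LBINT t:A. w t * exp (g t))" by simp
  have "(LBINT t:A. w t * exp (g t)) \<le> (LBINT t:A. exp M * w t)"
  proof (rule set_integral_mono[OF i wi2])
    fix t assume "t \<in> A"
    then have "0 \<le> w t" by (rule w0)
    moreover have "exp (g t) \<le> exp M" using gM[of t] by simp
    ultimately have "w t * exp (g t) \<le> w t * exp M" by (intro mult_left_mono) auto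
    then show "w t * exp (g t) \<le> exp M * w t" by (simp add: mult.commute)
  qed
  then show "(LBINT t:A. w t * exp (g t)) \<le> exp M * (LBINT t:A. w t)" by simp
qed

lemma weighted_exp_integral_diff:
  fixes w g1 g2 :: "real \<Rightarrow> real" and M \<delta> :: real
  assumes A: "A \<in> sets lborel" and wi: "set_integrable lborel A w"
    and wm: "w \<in> borel_measurable borel" and w0: "\<And>t. t \<in> A \<Longrightarrow> 0 \<le> w t"
    and gm1: "g1 \<in> borel_measurable borel" and gM1: "\<And>t. \<bar>g1 t\<bar> \<le> M"
    and gm2: "g2 \<in> borel_measurable borel" and gM2: "\<And>t. \<bar>g2 t\<bar> \<le> M"
    and d: "\<And>t. \<bar>g1 t - g2 t\<bar> \<le> \<delta>"
  shows "\<bar>(LBINT t:A. w t * exp (g1 t)) - (LBINT t:A. w t * exp (g2 t))\<bar>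
     \<le> exp M * \<delta> * (LBINT t:A. w t)"
proof -
  have i1: "set_integrable lborel A (\<lambda>t. w t * exp (g1 t))"
    by (rule weighted_exp_integral_bounds(1)[OF A wi wm w0 gm1 gM1])
  have i2: "set_integrable lborel A (\<lambda>t. w t * exp (g2 t))"
    by (rule weighted_exp_integral_bounds(1)[OF A wi wm w0 gm2 gM2])
  have id: "set_integrable lborel A (\<lambda>t. w t * exp (g1 t) - w t * exp (g2 t))"
    using i1 i2 by (rule set_integral_diff)
  have eq: "(LBINT t:A. w t * exp (g1 t)) - (LBINT t:A. w t * exp (g2 t))
     = (LBINT t:A. w t * exp (g1 t) - w t * exp (g2 t))"
    using i1 i2 by (simp add: set_integral_diff)
  have wi2: "set_integrable lborel A (\<lambda>t. exp M * \<delta> * w t)" using wi by simp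
  have "\<bar>LBINT t:A. w t * exp (g1 t) - w t * exp (g2 t)\<bar>
      \<le> (LBINT t:A. \<bar>w t * exp (g1 t) - w t * exp (g2 t)\<bar>)"
    using id unfolding set_lebesgue_integral_def set_integrable_def
    by (metis (no_types, lifting) Bochner_Integration.integral_cong abs_mult abs_of_nonneg
        indicator_pos_le integral_abs_bound real_scaleR_def)
  also have "\<dots> \<le> (LBINT t:A. exp M * \<delta> * w t)"
  proof (rule set_integral_mono[OF set_integrable_abs[OF id] wi2])
    fix t assume "t \<in> A"
    then have "0 \<le> w t" by (rule w0)
    have "\<bar>w t * exp (g1 t) - w t * exp (g2 t)\<bar> = w t * \<bar>exp (g1 t) - exp (g2 t)\<bar>"
      using \<open>0 \<le> w t\<close> by (simp add: right_diff_distrib[symmetric] abs_mult)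
    also have "\<dots> \<le> w t * (exp M * \<bar>g1 t - g2 t\<bar>)"
      using \<open>0 \<le> w t\<close> exp_lipschitz[OF gM1 gM2] by (intro mult_left_mono) auto
    also have "\<dots> \<le> w t * (exp M * \<delta>)"
      using \<open>0 \<le> w t\<close> d[of t] by (intro mult_left_mono) auto
    finally show "\<bar>w t * exp (g1 t) - w t * exp (g2 t)\<bar> \<le> exp M * \<delta> * w t" by (simp add: ac_simps)
  qed
  also have "\<dots> = exp M * \<delta> * (LBINT t:A. w t)" by simp
  finally show ?thesis using eq by simp
qed

section \<open>The weight and the function \<open>h\<^sup>-\<^sup>1\<close>\<close>

definition weight :: "real \<Rightarrow> real \<Rightarrow> real \<Rightarrow> real" where
  "weight \<mu> \<nu> t = \<bar>t\<bar> powr (\<nu> - 1) * (t\<^sup>2 + 1) powr ((\<mu> - \<nu>) / 2)"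

lemma hinvd_weight: "hinvd \<mu> \<nu> g = (\<lambda>t. weight \<mu> \<nu> t * exp (g t))"
  by (rule ext) (simp add: hinvd_def weight_def)

locale exponents =
  fixes \<mu> \<nu> :: real
  assumes mu: "\<mu> > 1/2" and nu0: "0 < \<nu>" and nu1: "\<nu> < 1/2"
begin

abbreviation "w \<equiv> weight \<mu> \<nu>"

lemma nu_less_mu: "\<nu> < \<mu>" using mu nu1 by simp

lemma weight_nonneg: "0 \<le> w t" by (simp add: weight_def)

lemma weight_pos: "t \<noteq> 0 \<Longrightarrow> 0 < w t"
  unfolding weight_def by simp

lemma weight_meas: "w \<in> borel_measurable borel"
  unfolding weight_def by measurable

lemma weight_even: "w (-t) = w t" by (simp add: weight_def)

lemma weight_le:
  assumes "0 < t" "t \<le> b"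
  shows "w t \<le> (b\<^sup>2 + 1) powr ((\<mu> - \<nu>) / 2) * t powr (\<nu> - 1)"
proof -
  have "t\<^sup>2 \<le> b\<^sup>2" using assms by (intro power_mono) auto
  then have "(t\<^sup>2 + 1) powr ((\<mu> - \<nu>) / 2) \<le> (b\<^sup>2 + 1) powr ((\<mu> - \<nu>) / 2)"
    using nu_less_mu by (intro powr_mono2) auto
  then show ?thesis using assms unfolding weight_def
    by (simp add: mult.commute mult_left_mono)
qed

lemma weight_ge_nu: "\<bar>t\<bar> powr (\<nu> - 1) \<le> w t"
proof -
  have "1 \<le> (t\<^sup>2 + 1) powr ((\<mu> - \<nu>) / 2)"
    using nu_less_mu by (intro ge_one_powr_ge_zero) auto
  then show ?thesis unfolding weight_def
    using mult_left_mono[of 1 "(t\<^sup>2 + 1) powr ((\<mu> - \<nu>) / 2)" "\<bar>t\<bar> powr (\<nu> - 1)"]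
    by simp
qed

lemma weight_ge_mu:
  assumes "t \<noteq> 0"
  shows "\<bar>t\<bar> powr (\<mu> - 1) \<le> w t"
proof -
  have "(t\<^sup>2) powr ((\<mu> - \<nu>) / 2) = \<bar>t\<bar> powr (2 * ((\<mu> - \<nu>) / 2))"
    by (rule sq_powr[OF assms])
  also have "2 * ((\<mu> - \<nu>) / 2) = \<mu> - \<nu>" by simp
  finally have eq: "(t\<^sup>2) powr ((\<mu> - \<nu>) / 2) = \<bar>t\<bar> powr (\<mu> - \<nu>)" .
  have "(t\<^sup>2) powr ((\<mu> - \<nu>) / 2) \<le> (t\<^sup>2 + 1) powr ((\<mu> - \<nu>) / 2)"
    using nu_less_mu by (intro powr_mono2) auto
  then have "\<bar>t\<bar> powr (\<nu> - 1) * \<bar>t\<bar> powr (\<mu> - \<nu>) \<le> w t"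
    unfolding weight_def eq by (intro mult_left_mono) auto
  then show ?thesis by (simp add: powr_add[symmetric])
qed

definition mass :: "real \<Rightarrow> real" where "mass b = (LBINT t:{0<..<b}. w t)"

lemma weight_integrable:
  assumes b: "0 < b"
  shows "set_integrable lborel {0<..<b} w"
proof -
  have "set_integrable lborel {0<..<b} (\<lambda>t. (b\<^sup>2 + 1) powr ((\<mu> - \<nu>) / 2) * t powr (\<nu> - 1))"
    using powr_integral_0(1)[of "\<nu> - 1" b] nu0 b by simp
  then show ?thesis
  proof (rule set_integrable_bound)
    show "set_borel_measurable lborel {0<..<b} w"
      unfolding set_borel_measurable_def using weight_meas by measurable
    show "AE x in lborel. x \<in> {0<..<b} \<longrightarrow>
        norm (w x) \<le> norm ((b\<^sup>2 + 1) powr ((\<mu> - \<nu>) / 2) * x powr (\<nu> - 1))"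
      using weight_le weight_nonneg by (intro AE_I2) (auto simp: abs_mult)
  qed
qed

lemma mass_lower:
  assumes b: "0 < b"
  shows "b powr \<nu> / \<nu> \<le> mass b" "b powr \<mu> / \<mu> \<le> mass b" "0 < mass b"
proof -
  note wi = weight_integrable[OF b]
  have p1: "set_integrable lborel {0<..<b} (\<lambda>t. t powr (\<nu> - 1))"
    "(LBINT t:{0<..<b}. t powr (\<nu> - 1)) = b powr \<nu> / \<nu>"
    using powr_integral_0[of "\<nu> - 1" b] nu0 b by auto
  have p2: "set_integrable lborel {0<..<b} (\<lambda>t. t powr (\<mu> - 1))"
    "(LBINT t:{0<..<b}. t powr (\<mu> - 1)) = b powr \<mu> / \<mu>"
    using powr_integral_0[of "\<mu> - 1" b] mu b by auto
  have "(LBINT t:{0<..<b}. t powr (\<nu> - 1)) \<le> (LBINT t:{0<..<b}. w t)"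
    using weight_ge_nu by (intro set_integral_mono[OF p1(1) wi])
      (metis abs_of_pos greaterThanLessThan_iff)
  then show nu: "b powr \<nu> / \<nu> \<le> mass b" using p1 unfolding mass_def by simp
  have "(LBINT t:{0<..<b}. t powr (\<mu> - 1)) \<le> (LBINT t:{0<..<b}. w t)"
    using weight_ge_mu by (intro set_integral_mono[OF p2(1) wi])
      (metis abs_of_pos greaterThanLessThan_iff less_irrefl)
  then show "b powr \<mu> / \<mu> \<le> mass b" using p2 unfolding mass_def by simp
  have "0 < b powr \<nu> / \<nu>" using b nu0 by simp
  with nu show "0 < mass b" by linarith
qed

text \<open>By evenness of \<open>w\<close>, the mass of \<open>(x, 0)\<close> for \<open>x < 0\<close> is \<open>W(\<bar>x\<bar>)\<close>.\<close>
lemma mass_neg: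
  assumes x: "x < 0"
  shows "set_integrable lborel {x<..<0} w" "(LBINT t:{x<..<0}. w t) = mass \<bar>x\<bar>"
proof -
  have e: "{t. - t \<in> {0<..<-x}} = {x<..<0}" by auto
  show "set_integrable lborel {x<..<0} w"
    using set_integrable_reflect[OF weight_integrable[of "-x"], unfolded e weight_even] x by simp
  have e2: "{t. - t \<in> {x<..<0}} = {0<..<-x}" by auto
  show "(LBINT t:{x<..<0}. w t) = mass \<bar>x\<bar>"
    unfolding mass_def using x by (subst set_integral_reflect) (simp only: e2 weight_even abs_of_neg)
qed

lemma hinv_pos: "0 < x \<Longrightarrow> hinv \<mu> \<nu> g x = (LBINT t:{0<..<x}. w t * exp (g t))"
  unfolding hinv_def interval_lebesgue_integral_def
  by (simp add: einterval_0_real hinvd_weight zero_ereal_def)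

lemma hinv_neg: "x < 0 \<Longrightarrow> hinv \<mu> \<nu> g x = - (LBINT t:{x<..<0}. w t * exp (g t))"
proof -
  assume "x < 0"
  moreover have "einterval (ereal x) 0 = {x<..<0}" by (auto simp: einterval_def zero_ereal_def)
  ultimately show ?thesis
    unfolding hinv_def interval_lebesgue_integral_def by (simp add: hinvd_weight zero_ereal_def)
qed

lemma hinv_0: "hinv \<mu> \<nu> g 0 = 0"
  unfolding hinv_def by (simp add: zero_ereal_def)

lemma xhinv_bounds:
  assumes g: "admissible M g" and x: "x \<noteq> 0"
  shows "exp (-M) * (\<bar>x\<bar> * mass \<bar>x\<bar>) \<le> x * hinv \<mu> \<nu> g x"
    "x * hinv \<mu> \<nu> g x \<le> exp M * (\<bar>x\<bar> * mass \<bar>x\<bar>)"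
proof -
  have "exp (-M) * mass \<bar>x\<bar> \<le> \<bar>hinv \<mu> \<nu> g x\<bar> \<and> \<bar>hinv \<mu> \<nu> g x\<bar> \<le> exp M * mass \<bar>x\<bar>
    \<and> x * hinv \<mu> \<nu> g x = \<bar>x\<bar> * \<bar>hinv \<mu> \<nu> g x\<bar>"
  proof (cases "0 < x")
    case True
    let ?S = "LBINT t:{0<..<x}. w t * exp (g t)"
    note G = weighted_exp_integral_bounds[OF _ weight_integrable[OF True] weight_meas _
        admissibleD[OF g], simplified]
    have lo: "exp (-M) * mass x \<le> ?S" and up: "?S \<le> exp M * mass x"
      using G(2,3) weight_nonneg unfolding mass_def by auto
    have "0 \<le> ?S" using lo mass_lower(3)[OF True] by (meson exp_gt_zero less_le_trans
        less_eq_real_def mult_pos_pos)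
    then show ?thesis using lo up True unfolding hinv_pos[OF True] by simp
  next
    case False
    then have xn: "x < 0" using x by simp
    let ?S = "LBINT t:{x<..<0}. w t * exp (g t)"
    note G = weighted_exp_integral_bounds[OF _ mass_neg(1)[OF xn] weight_meas _
        admissibleD[OF g], simplified]
    have lo: "exp (-M) * mass \<bar>x\<bar> \<le> ?S" and up: "?S \<le> exp M * mass \<bar>x\<bar>"
      using G(2,3) weight_nonneg mass_neg(2)[OF xn] by auto
    have "0 \<le> ?S" using lo mass_lower(3)[of "\<bar>x\<bar>"] x by (meson exp_gt_zero less_le_trans
        less_eq_real_def mult_pos_pos zero_less_abs_iff)
    then show ?thesis using lo up xn unfolding hinv_neg[OF xn] by simp
  qed
  moreover have "0 \<le> \<bar>x\<bar>" by simp
  ultimately show "exp (-M) * (\<bar>x\<bar> * mass \<bar>x\<bar>) \<le> x * hinv \<mu> \<nu> g x"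
    "x * hinv \<mu> \<nu> g x \<le> exp M * (\<bar>x\<bar> * mass \<bar>x\<bar>)"
    by (metis mult.left_commute mult_left_mono)+
qed

lemma xhinv_diff:
  assumes g1: "admissible M g1" and g2: "admissible M g2"
    and d: "\<And>t. \<bar>g1 t - g2 t\<bar> \<le> \<delta>" and x: "x \<noteq> 0"
  shows "\<bar>x * hinv \<mu> \<nu> g1 x - x * hinv \<mu> \<nu> g2 x\<bar> \<le> exp M * \<delta> * (\<bar>x\<bar> * mass \<bar>x\<bar>)"
proof -
  have "\<bar>hinv \<mu> \<nu> g1 x - hinv \<mu> \<nu> g2 x\<bar> \<le> exp M * \<delta> * mass \<bar>x\<bar>"
  proof (cases "0 < x")
    case True
    have "\<bar>(LBINT t:{0<..<x}. w t * exp (g1 t)) - (LBINT t:{0<..<x}. w t * exp (g2 t))\<bar>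
       \<le> exp M * \<delta> * (LBINT t:{0<..<x}. w t)"
      using weight_nonneg by (intro weighted_exp_integral_diff[OF _ weight_integrable[OF True]
          weight_meas _ admissibleD[OF g1] admissibleD[OF g2] d]) auto
    then show ?thesis using True unfolding mass_def hinv_pos[OF True] by simp
  next
    case False
    then have xn: "x < 0" using x by simp
    have "\<bar>(LBINT t:{x<..<0}. w t * exp (g1 t)) - (LBINT t:{x<..<0}. w t * exp (g2 t))\<bar>
       \<le> exp M * \<delta> * (LBINT t:{x<..<0}. w t)"
      using weight_nonneg by (intro weighted_exp_integral_diff[OF _ mass_neg(1)[OF xn]
          weight_meas _ admissibleD[OF g1] admissibleD[OF g2] d]) auto
    then show ?thesis using mass_neg(2)[OF xn] unfolding hinv_neg[OF xn]
      by (simp add: abs_minus_commute)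
  qed
  then have "\<bar>x\<bar> * \<bar>hinv \<mu> \<nu> g1 x - hinv \<mu> \<nu> g2 x\<bar> \<le> \<bar>x\<bar> * (exp M * \<delta> * mass \<bar>x\<bar>)"
    by (intro mult_left_mono) auto
  then show ?thesis by (simp add: abs_mult right_diff_distrib[symmetric] ac_simps)
qed

text \<open>\<open>h\<^sup>-\<^sup>1\<close> is nondecreasing, hence Borel measurable.\<close>
lemma hinv_mono:
  assumes g: "admissible M g"
  shows "mono (hinv \<mu> \<nu> g)"
proof (rule monoI)
  fix x y :: real assume xy: "x \<le> y"
  have nn: "0 \<le> w t * exp (g t)" for t using weight_nonneg by simp
  have sign: "0 \<le> z * hinv \<mu> \<nu> g z" for z
    using xhinv_bounds(1)[OF g, of z] mass_lower(3)[of "\<bar>z\<bar>"]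
    by (cases "z = 0") (auto intro: order_trans[rotated])
  show "hinv \<mu> \<nu> g x \<le> hinv \<mu> \<nu> g y"
  proof (cases "0 < x")
    case True
    then have y: "0 < y" using xy by simp
    have "(LBINT t:{0<..<x}. w t * exp (g t)) \<le> (LBINT t:{0<..<y}. w t * exp (g t))"
      using xy nn weight_nonneg
      by (intro set_integral_subset_mono weighted_exp_integral_bounds(1)[OF _
          weight_integrable[OF y] weight_meas _ admissibleD[OF g]]) auto
    then show ?thesis unfolding hinv_pos[OF True] hinv_pos[OF y] .
  next
    case False
    show ?thesis
    proof (cases "y < 0")
      case True
      then have x: "x < 0" using xy by simp
      have "(LBINT t:{y<..<0}. w t * exp (g t)) \<le> (LBINT t:{x<..<0}. w t * exp (g t))"
        using xy nn weight_nonneg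
        by (intro set_integral_subset_mono weighted_exp_integral_bounds(1)[OF _
            mass_neg(1)[OF x] weight_meas _ admissibleD[OF g]]) auto
      then show ?thesis unfolding hinv_neg[OF True] hinv_neg[OF x] by simp
    next
      case False
      then show ?thesis using sign[of x] sign[of y] hinv_0 \<open>\<not> 0 < x\<close>
        by (cases "x = 0"; cases "y = 0") (auto simp: zero_le_mult_iff)
    qed
  qed
qed

lemma hinv_meas:
  assumes g: "admissible M g"
  shows "hinv \<mu> \<nu> g \<in> borel_measurable borel"
  by (rule borel_measurable_mono[OF hinv_mono[OF g]])

section \<open>The denominator of \<open>F'\<close>\<close>

definition den :: "(real \<Rightarrow> real) \<Rightarrow> real \<Rightarrow> real" where
  "den g x = x * hinv \<mu> \<nu> g x * hinvd \<mu> \<nu> g x"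

definition den0 :: "real \<Rightarrow> real" where
  "den0 x = \<bar>x\<bar> * mass \<bar>x\<bar> * w x"

lemma den_0: "den g 0 = 0" by (simp add: den_def)

lemma den0_0: "den0 0 = 0" by (simp add: den0_def)

lemma den0_pos: "x \<noteq> 0 \<Longrightarrow> 0 < den0 x"
  unfolding den0_def using mass_lower(3)[of "\<bar>x\<bar>"] weight_pos[of x] by simp

lemma den0_eq_den: "den0 = den (\<lambda>_. 0)"
proof
  fix x
  have "admissible 0 (\<lambda>_. 0)" by (simp add: admissible_def)
  then have "x * hinv \<mu> \<nu> (\<lambda>_. 0) x = \<bar>x\<bar> * mass \<bar>x\<bar>" if "x \<noteq> 0"
    using xhinv_bounds[of 0 "\<lambda>_. 0" x] that by simp
  then show "den0 x = den (\<lambda>_. 0) x"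
    by (cases "x = 0") (simp_all add: den0_def den_def hinvd_weight)
qed

lemma den_meas:
  assumes g: "admissible M g"
  shows "den g \<in> borel_measurable borel"
proof -
  note [measurable] = hinv_meas[OF g] weight_meas admissibleD(1)[OF g]
  show ?thesis unfolding den_def hinvd_weight by measurable
qed

lemma den_bounds:
  assumes g: "admissible M g" and x: "x \<noteq> 0"
  shows "exp (-2*M) * den0 x \<le> den g x" "den g x \<le> exp (2*M) * den0 x"
proof -
  note B = xhinv_bounds[OF g x]
  have w: "0 < w x" using weight_pos[OF x] .
  have e1: "exp (-M) \<le> exp (g x)" "exp (g x) \<le> exp M" using admissibleD(2)[OF g, of x] by auto
  have P: "den g x = (x * hinv \<mu> \<nu> g x) * (w x * exp (g x))" by (simp add: den_def hinvd_weight)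
  have V: "0 \<le> \<bar>x\<bar> * mass \<bar>x\<bar>" using mass_lower(3)[of "\<bar>x\<bar>"] x by simp
  have "(exp (-M) * (\<bar>x\<bar> * mass \<bar>x\<bar>)) * (w x * exp (-M)) \<le> (x * hinv \<mu> \<nu> g x) * (w x * exp (g x))"
  proof (rule mult_mono)
    show "0 \<le> x * hinv \<mu> \<nu> g x" using B V by (meson exp_ge_zero order_trans zero_le_mult_iff)
    show "w x * exp (-M) \<le> w x * exp (g x)" using e1 w by (intro mult_left_mono) auto
  qed (use B w in auto)
  moreover have "(x * hinv \<mu> \<nu> g x) * (w x * exp (g x)) \<le> (exp M * (\<bar>x\<bar> * mass \<bar>x\<bar>)) * (w x * exp M)"
  proof (rule mult_mono)
    show "w x * exp (g x) \<le> w x * exp M" using e1 w by (intro mult_left_mono) auto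
  qed (use B V w in auto)
  moreover have "exp (-2*M) = exp (-M) * exp (-M)" "exp (2*M) = exp M * exp M"
    by (simp_all add: exp_add[symmetric])
  ultimately show "exp (-2*M) * den0 x \<le> den g x" "den g x \<le> exp (2*M) * den0 x"
    unfolding P den0_def by (simp_all add: ac_simps)
qed

lemma den_diff:
  assumes g1: "admissible M g1" and g2: "admissible M g2"
    and d: "\<And>t. \<bar>g1 t - g2 t\<bar> \<le> \<delta>" and x: "x \<noteq> 0"
  shows "\<bar>den g1 x - den g2 x\<bar> \<le> 2 * exp (2*M) * \<delta> * den0 x"
proof -
  note B2 = xhinv_bounds[OF g2 x]
  have w: "0 < w x" using weight_pos[OF x] .
  have V: "0 \<le> \<bar>x\<bar> * mass \<bar>x\<bar>" using mass_lower(3)[of "\<bar>x\<bar>"] x by simp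
  have h2: "0 \<le> x * hinv \<mu> \<nu> g2 x"
    using B2 V by (meson exp_ge_zero order_trans zero_le_mult_iff)
  have a1: "w x * exp (g1 x) \<le> exp M * w x" using admissibleD(2)[OF g1, of x] w by simp
  have ad: "\<bar>w x * exp (g1 x) - w x * exp (g2 x)\<bar> \<le> exp M * \<delta> * w x"
  proof -
    have "\<bar>w x * exp (g1 x) - w x * exp (g2 x)\<bar> = w x * \<bar>exp (g1 x) - exp (g2 x)\<bar>"
      using w by (simp add: right_diff_distrib[symmetric] abs_mult)
    also have "\<dots> \<le> w x * (exp M * \<bar>g1 x - g2 x\<bar>)"
      using w exp_lipschitz[OF admissibleD(2)[OF g1] admissibleD(2)[OF g2]]
      by (intro mult_left_mono) auto
    also have "\<dots> \<le> w x * (exp M * \<delta>)"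
      using w d[of x] by (intro mult_left_mono) auto
    finally show ?thesis by (simp add: ac_simps)
  qed
  have "\<bar>(x * hinv \<mu> \<nu> g1 x) * (w x * exp (g1 x)) - (x * hinv \<mu> \<nu> g2 x) * (w x * exp (g2 x))\<bar>
     \<le> 2 * exp M * exp M * \<delta> * (\<bar>x\<bar> * mass \<bar>x\<bar>) * w x"
    by (rule product_perturbation[OF xhinv_diff[OF g1 g2 d x] h2 B2(2) _ a1 ad])
       (use w V in auto)
  moreover have "exp (2*M) = exp M * exp M" by (simp add: exp_add[symmetric])
  ultimately show ?thesis by (simp add: den_def hinvd_weight den0_def ac_simps)
qed

lemma inv_den_bounds:
  assumes g: "admissible M g"
  shows "exp (-2*M) * (1 / den0 x) \<le> 1 / den g x" "1 / den g x \<le> exp (2*M) * (1 / den0 x)"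
proof -
  have "exp (-2*M) * (1 / den0 x) \<le> 1 / den g x \<and> 1 / den g x \<le> exp (2*M) * (1 / den0 x)"
  proof (cases "x = 0")
    case True then show ?thesis by (simp add: den_0 den0_0)
  next
    case False
    note B = den_bounds[OF g False]
    have lo: "0 < exp (-2*M) * den0 x" using den0_pos[OF False] by simp
    have Pp: "0 < den g x" using B lo by linarith
    have "1 / den g x \<le> 1 / (exp (-2*M) * den0 x)"
      using B lo by (intro divide_left_mono) auto
    also have "\<dots> = exp (2*M) * (1 / den0 x)" by (simp add: exp_minus field_simps)
    finally have 1: "1 / den g x \<le> exp (2*M) * (1 / den0 x)" .
    have "1 / (exp (2*M) * den0 x) \<le> 1 / den g x"
      using B Pp by (intro divide_left_mono) auto
    moreover have "1 / (exp (2*M) * den0 x) = exp (-2*M) * (1 / den0 x)"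
      by (simp add: exp_minus field_simps)
    ultimately show ?thesis using 1 by simp
  qed
  then show "exp (-2*M) * (1 / den0 x) \<le> 1 / den g x" "1 / den g x \<le> exp (2*M) * (1 / den0 x)"
    by auto
qed

lemma inv_den_diff:
  assumes g1: "admissible M g1" and g2: "admissible M g2"
    and d: "\<And>t. \<bar>g1 t - g2 t\<bar> \<le> \<delta>"
  shows "\<bar>1 / den g1 x - 1 / den g2 x\<bar> \<le> 2 * exp (6*M) * \<delta> * (1 / den0 x)"
proof (cases "x = 0")
  case True then show ?thesis by (simp add: den_0 den0_0)
next
  case False
  have "\<bar>1 / den g1 x - 1 / den g2 x\<bar> \<le> (2 * exp (2*M) * \<delta>) / (exp (-2*M) * exp (-2*M) * den0 x)"
    using den_bounds[OF g1 False] den_bounds[OF g2 False] den_diff[OF g1 g2 d False]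
    by (intro reciprocal_perturbation den0_pos[OF False]) (auto simp: mult.commute)
  also have "\<dots> = 2 * exp (6*M) * \<delta> * (1 / den0 x)"
  proof -
    have "exp (6*M) = exp (2*M) * exp (2*M) * exp (2*M)" by (simp add: exp_add[symmetric])
    moreover have "exp (-2*M) * exp (2*M) = 1" by (simp add: exp_add[symmetric])
    ultimately show ?thesis using den0_pos[OF False] by (simp add: field_simps)
  qed
  finally show ?thesis .
qed

section \<open>The rate function\<close>

definition rate :: "real \<Rightarrow> real" where
  "rate x = 1 / (\<bar>x\<bar> powr (2 * \<nu>) * (x\<^sup>2 + 1) powr (\<mu> - \<nu>))"

definition rate_root :: "real \<Rightarrow> real" where
  "rate_root x = \<bar>x\<bar> powr \<nu> * (x\<^sup>2 + 1) powr ((\<mu> - \<nu>) / 2)"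

lemma rate_rate_root: "rate x = 1 / (rate_root x)\<^sup>2"
proof -
  have "\<bar>x\<bar> powr (2 * \<nu>) = (\<bar>x\<bar> powr \<nu>)\<^sup>2"
    by (simp add: power2_eq_square powr_add[symmetric])
  moreover have "(x\<^sup>2 + 1) powr (\<mu> - \<nu>) = ((x\<^sup>2 + 1) powr ((\<mu> - \<nu>) / 2))\<^sup>2"
    by (simp add: power2_eq_square powr_add[symmetric])
  ultimately show ?thesis unfolding rate_def rate_root_def by (simp add: power_mult_distrib)
qed

lemma den0_rate_root: "den0 x = rate_root x * mass \<bar>x\<bar>"
proof (cases "x = 0")
  case True then show ?thesis by (simp add: den0_def rate_root_def)
next
  case False
  have e: "\<bar>x\<bar> * \<bar>x\<bar> powr (\<nu> - 1) = \<bar>x\<bar> powr \<nu>"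
    using False by (simp add: powr_add[symmetric] powr_diff)
  have "den0 x = (\<bar>x\<bar> * \<bar>x\<bar> powr (\<nu> - 1)) * (x\<^sup>2 + 1) powr ((\<mu> - \<nu>) / 2) * mass \<bar>x\<bar>"
    unfolding den0_def weight_def by (simp only: ac_simps)
  then show ?thesis unfolding rate_root_def e .
qed

lemma rate_nonneg: "0 \<le> rate x" by (simp add: rate_def)

lemma rate_even: "rate (-x) = rate x" by (simp add: rate_def)

lemma rate_meas: "rate \<in> borel_measurable borel"
  unfolding rate_def by measurable

lemma rate_le_nu:
  assumes "0 < x" shows "rate x \<le> x powr (-2 * \<nu>)"
proof -
  have x: "x \<noteq> 0" using assms by simp
  have "1 \<le> (x\<^sup>2 + 1) powr (\<mu> - \<nu>)"
    using nu_less_mu by (intro ge_one_powr_ge_zero) auto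
  then have "\<bar>x\<bar> powr (2 * \<nu>) \<le> \<bar>x\<bar> powr (2 * \<nu>) * (x\<^sup>2 + 1) powr (\<mu> - \<nu>)"
    using mult_left_mono[of 1 _ "\<bar>x\<bar> powr (2 * \<nu>)"] by simp
  moreover have "0 < \<bar>x\<bar> powr (2 * \<nu>)" using x by simp
  ultimately have "rate x \<le> 1 / \<bar>x\<bar> powr (2 * \<nu>)"
    unfolding rate_def by (intro divide_left_mono) (auto simp: zero_less_mult_iff)
  also have "\<dots> = x powr (-2 * \<nu>)" using assms by (simp add: powr_minus_divide)
  finally show ?thesis .
qed

lemma rate_le_mu:
  assumes "0 < x" shows "rate x \<le> x powr (-2 * \<mu>)"
proof -
  have x: "x \<noteq> 0" using assms by simp
  have "(x\<^sup>2) powr (\<mu> - \<nu>) \<le> (x\<^sup>2 + 1) powr (\<mu> - \<nu>)"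
    using nu_less_mu by (intro powr_mono2) auto
  then have "\<bar>x\<bar> powr (2 * (\<mu> - \<nu>)) \<le> (x\<^sup>2 + 1) powr (\<mu> - \<nu>)"
    using sq_powr[OF x] by simp
  then have "\<bar>x\<bar> powr (2 * \<nu>) * \<bar>x\<bar> powr (2 * (\<mu> - \<nu>))
      \<le> \<bar>x\<bar> powr (2 * \<nu>) * (x\<^sup>2 + 1) powr (\<mu> - \<nu>)"
    by (intro mult_left_mono) auto
  moreover have "\<bar>x\<bar> powr (2 * \<nu>) * \<bar>x\<bar> powr (2 * (\<mu> - \<nu>)) = \<bar>x\<bar> powr (2 * \<mu>)"
    by (simp add: powr_add[symmetric] algebra_simps)
  moreover have "0 < \<bar>x\<bar> powr (2 * \<mu>)" using x by simp
  ultimately have "rate x \<le> 1 / \<bar>x\<bar> powr (2 * \<mu>)"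
    unfolding rate_def by (intro divide_left_mono) (auto simp: zero_less_mult_iff)
  also have "\<dots> = x powr (-2 * \<mu>)" using assms by (simp add: powr_minus_divide)
  finally show ?thesis .
qed

text \<open>Step (3): \<open>rate_root \<le> C W(\<bar>x\<bar>)\<close>, using \<open>W(b) \<ge> b\<^sup>\<nu>/\<nu>\<close> for \<open>b \<le> 1\<close> and
  \<open>W(b) \<ge> b\<^sup>\<mu>/\<mu>\<close> for \<open>b \<ge> 1\<close>; hence \<open>1/den0 \<le> C rate\<close>.\<close>
definition rate_const :: real where "rate_const = 2 powr ((\<mu> - \<nu>) / 2) * (\<nu> + \<mu>)"

lemma rate_const_pos: "0 < rate_const" unfolding rate_const_def using nu0 mu by simp

lemma rate_root_le_mass:
  assumes x: "x \<noteq> 0" shows "rate_root x \<le> rate_const * mass \<bar>x\<bar>"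
proof (cases "\<bar>x\<bar> \<le> 1")
  case True
  have "\<bar>x\<bar>\<^sup>2 \<le> 1\<^sup>2" using True by (intro power_mono) auto
  then have "x\<^sup>2 + 1 \<le> 2" by simp
  then have "(x\<^sup>2 + 1) powr ((\<mu> - \<nu>) / 2) \<le> 2 powr ((\<mu> - \<nu>) / 2)"
    using nu_less_mu by (intro powr_mono2) auto
  then have "rate_root x \<le> \<bar>x\<bar> powr \<nu> * 2 powr ((\<mu> - \<nu>) / 2)"
    unfolding rate_root_def by (intro mult_left_mono) auto
  also have "\<dots> = 2 powr ((\<mu> - \<nu>) / 2) * \<nu> * (\<bar>x\<bar> powr \<nu> / \<nu>)" using nu0 by simp
  also have "\<dots> \<le> 2 powr ((\<mu> - \<nu>) / 2) * \<nu> * mass \<bar>x\<bar>"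
    using mass_lower(1)[of "\<bar>x\<bar>"] x nu0 by (intro mult_left_mono) auto
  also have "\<dots> \<le> rate_const * mass \<bar>x\<bar>"
    unfolding rate_const_def using mass_lower(3)[of "\<bar>x\<bar>"] x mu nu0
    by (intro mult_right_mono mult_left_mono) auto
  finally show ?thesis .
next
  case False
  have e2: "2 * ((\<mu> - \<nu>) / 2) = \<mu> - \<nu>" by simp
  have "1\<^sup>2 \<le> \<bar>x\<bar>\<^sup>2" using False by (intro power_mono) auto
  then have "x\<^sup>2 + 1 \<le> 2 * x\<^sup>2" by simp
  then have "(x\<^sup>2 + 1) powr ((\<mu> - \<nu>) / 2) \<le> (2 * x\<^sup>2) powr ((\<mu> - \<nu>) / 2)"
    using nu_less_mu by (intro powr_mono2) auto
  also have "\<dots> = 2 powr ((\<mu> - \<nu>) / 2) * \<bar>x\<bar> powr (\<mu> - \<nu>)"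
    using sq_powr[OF x, of "(\<mu> - \<nu>) / 2", unfolded e2] by (simp add: powr_mult)
  finally have "rate_root x \<le> \<bar>x\<bar> powr \<nu> * (2 powr ((\<mu> - \<nu>) / 2) * \<bar>x\<bar> powr (\<mu> - \<nu>))"
    unfolding rate_root_def by (intro mult_left_mono) auto
  also have "\<dots> = 2 powr ((\<mu> - \<nu>) / 2) * \<mu> * (\<bar>x\<bar> powr \<mu> / \<mu>)"
    using mu by (simp add: powr_add[symmetric])
  also have "\<dots> \<le> 2 powr ((\<mu> - \<nu>) / 2) * \<mu> * mass \<bar>x\<bar>"
    using mass_lower(2)[of "\<bar>x\<bar>"] x mu by (intro mult_left_mono) auto
  also have "\<dots> \<le> rate_const * mass \<bar>x\<bar>"
    unfolding rate_const_def using mass_lower(3)[of "\<bar>x\<bar>"] x mu nu0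
    by (intro mult_right_mono mult_left_mono) auto
  finally show ?thesis .
qed

lemma inv_den0_le_rate: "1 / den0 x \<le> rate_const * rate x"
proof (cases "x = 0")
  case True then show ?thesis by (simp add: den0_def rate_def)
next
  case False
  have V: "0 < rate_root x" unfolding rate_root_def using False by (simp add: zero_less_mult_iff)
  have W: "0 < mass \<bar>x\<bar>" using mass_lower(3)[of "\<bar>x\<bar>"] False by simp
  have "rate_root x * rate_root x \<le> rate_root x * (rate_const * mass \<bar>x\<bar>)"
    using rate_root_le_mass[OF False] V by (intro mult_left_mono) auto
  then have "1 / den0 x \<le> rate_const / (rate_root x * rate_root x)"
    using V W rate_const_pos unfolding den0_rate_root by (simp add: field_simps)
  then show ?thesis by (simp add: rate_rate_root power2_eq_square)
qed

text \<open>The rate is integrable: it is \<open>\<le> x\<^sup>-\<^sup>2\<^sup>\<nu>\<close> on \<open>(0,1)\<close> with \<open>-2\<nu> > -1\<close> and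
  \<open>\<le> x\<^sup>-\<^sup>2\<^sup>\<mu>\<close> on \<open>(1,\<infinity>)\<close> with \<open>-2\<mu> < -1\<close>, and it is even.\<close>
lemma rate_integrable_pos: "set_integrable lborel {0<..} rate"
proof -
  have a: "set_integrable lborel {0<..<1} rate"
  proof (rule set_integrable_bound[OF powr_integral_0(1)[of "-2*\<nu>" 1]])
    show "-1 < -2*\<nu>" using nu1 by simp
    show "set_borel_measurable lborel {0<..<1} rate"
      unfolding set_borel_measurable_def using rate_meas by measurable
    show "AE x in lborel. x \<in> {0<..<1} \<longrightarrow> norm (rate x) \<le> norm (x powr (-2*\<nu>))"
      using rate_le_nu rate_nonneg by (intro AE_I2) (auto simp: abs_of_nonneg)
  qed simp
  have b: "set_integrable lborel {1<..} rate"
  proof (rule set_integrable_bound[OF powr_integral_tail(1)[of "-2*\<mu>" 1]])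
    show "-2*\<mu> < -1" using mu by simp
    show "set_borel_measurable lborel {1<..} rate"
      unfolding set_borel_measurable_def using rate_meas by measurable
    show "AE x in lborel. x \<in> {1<..} \<longrightarrow> norm (rate x) \<le> norm (x powr (-2*\<mu>))"
      using rate_le_mu rate_nonneg by (intro AE_I2) (auto simp: abs_of_nonneg)
  qed simp
  have "set_integrable lborel ({0<..<1} \<union> {1<..}) rate"
    using a b by (intro set_integrable_Un) auto
  moreover have "set_integrable lborel ({0<..<1} \<union> {1<..}) rate \<longleftrightarrow> set_integrable lborel {0<..} rate"
    by (rule set_integrable_discrete_difference[where X="{1}"]) auto
  ultimately show ?thesis by simp
qed

lemma rate_integrable: "integrable lborel rate"
proof -
  have e: "{x. - x \<in> {0<..}} = {..<(0::real)}" by auto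
  have n: "set_integrable lborel {..<0} rate"
    using set_integrable_reflect[OF rate_integrable_pos, unfolded e rate_even] .
  have "set_integrable lborel ({..<0} \<union> {0<..}) rate"
    using n rate_integrable_pos by (intro set_integrable_Un) auto
  moreover have "set_integrable lborel ({..<0} \<union> {0<..}) rate \<longleftrightarrow> set_integrable lborel UNIV rate"
    by (rule set_integrable_discrete_difference[where X="{0}"]) auto
  ultimately show ?thesis unfolding set_integrable_def by simp
qed

lemma rate_tail_right:
  assumes b: "0 < b"
  shows "(LBINT t:{b<..}. rate t) \<le> b powr (1 - 2*\<mu>) / (2*\<mu> - 1)"
proof -
  have p: "-2*\<mu> < -1" using mu by simp
  have "set_integrable lborel {b<..} rate"
    using rate_integrable unfolding set_integrable_def by (intro integrable_mult_indicator) auto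
  then have "(LBINT t:{b<..}. rate t) \<le> (LBINT t:{b<..}. t powr (-2*\<mu>))"
    using rate_le_mu b by (intro set_integral_mono[OF _ powr_integral_tail(1)[OF p b]]) auto
  also have "\<dots> = b powr (1 - 2*\<mu>) / (2*\<mu> - 1)"
    using powr_integral_tail(2)[OF p b] mu by (simp add: field_simps)
  finally show ?thesis .
qed

lemma rate_tail_left:
  assumes b: "0 < b"
  shows "(LBINT t:{..-b}. rate t) \<le> b powr (1 - 2*\<mu>) / (2*\<mu> - 1)"
proof -
  have e: "{x. - x \<in> {..-b}} = {b..}" by auto
  have "(LBINT t:{..-b}. rate t) = (LBINT t:{b..}. rate t)"
    by (subst set_integral_reflect) (simp only: e rate_even)
  also have "\<dots> = (LBINT t:{b<..}. rate t)"
    by (rule set_integral_discrete_difference[where X="{b}"]) auto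
  finally show ?thesis using rate_tail_right[OF b] by simp
qed

definition rate_total :: real where "rate_total = (LBINT t. rate t)"

lemma rate_total_ge: "S \<in> sets lborel \<Longrightarrow> (LBINT t:S. rate t) \<le> rate_total"
proof -
  assume S: "S \<in> sets lborel"
  have "set_integrable lborel UNIV rate" using rate_integrable unfolding set_integrable_def by simp
  then have "(LBINT t:S. rate t) \<le> (LBINT t:UNIV. rate t)"
    using S rate_nonneg by (intro set_integral_subset_mono) auto
  then show ?thesis unfolding rate_total_def set_lebesgue_integral_def by simp
qed

lemma rate_total_nonneg: "0 \<le> rate_total"
  unfolding rate_total_def using rate_nonneg by simp

section \<open>The normalising constant \<open>\<kappa>\<close> and the functions \<open>F'\<close>, \<open>F\<close>\<close>

definition J0 :: real where "J0 = (LBINT x. 1 / den0 x)"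

lemma inv_den0_nonneg: "0 \<le> 1 / den0 x"
  using den0_pos[of x] den0_0 by (cases "x = 0") auto

lemma inv_den0_integrable: "integrable lborel (\<lambda>x. c / den0 x)"
proof -
  have "den0 \<in> borel_measurable borel"
    unfolding den0_eq_den by (rule den_meas[of 0]) (simp add: admissible_def)
  have "integrable lborel (\<lambda>x. 1 / den0 x)"
  proof (rule Bochner_Integration.integrable_bound)
    show "integrable lborel (\<lambda>x. rate_const * rate x)" using rate_integrable by simp
    show "(\<lambda>x. 1 / den0 x) \<in> borel_measurable lborel" using \<open>den0 \<in> borel_measurable borel\<close> by simp
    show "AE x in lborel. norm (1 / den0 x) \<le> norm (rate_const * rate x)"
      using inv_den0_le_rate inv_den0_nonneg rate_nonneg rate_const_pos
      by (intro AE_I2) (auto simp: abs_of_nonneg)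
  qed
  from integrable_mult_right[OF this, of c] show ?thesis by simp
qed

lemma integral_inv_den0: "(LBINT x. c / den0 x) = c * J0"
proof -
  have "(LBINT x. c / den0 x) = (LBINT x. c * (1 / den0 x))" by simp
  also have "\<dots> = c * (LBINT x. 1 / den0 x)" by (rule integral_mult_right_zero)
  finally show ?thesis unfolding J0_def .
qed

lemma J0_pos: "0 < J0"
proof -
  have int: "integrable lborel (\<lambda>x. 1 / den0 x)" using inv_den0_integrable[of 1] .
  have "0 \<le> J0" unfolding J0_def using inv_den0_nonneg by simp
  moreover have "J0 \<noteq> 0"
  proof
    assume "J0 = 0"
    then have "AE x in lborel. 1 / den0 x = 0"
      using integral_nonneg_eq_0_iff_AE[OF int] inv_den0_nonneg unfolding J0_def by simp
    moreover have "AE x in lborel. (x::real) \<noteq> 0" by (rule AE_lborel_singleton)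
    ultimately have "AE (x::real) in lborel. False"
      by eventually_elim (use den0_pos in force)
    then have "UNIV \<in> null_sets (lborel :: real measure)"
      using AE_iff_null[of "lborel :: real measure" "\<lambda>_. False"] by simp
    then have "emeasure (lborel :: real measure) UNIV = 0" by auto
    then show False by simp
  qed
  ultimately show ?thesis by simp
qed

lemma inv_den_integrable:
  assumes g: "admissible M g"
  shows "integrable lborel (\<lambda>x. 1 / den g x)"
proof (rule Bochner_Integration.integrable_bound)
  show "integrable lborel (\<lambda>x. exp (2*M) / den0 x)" by (rule inv_den0_integrable)
  show "(\<lambda>x. 1 / den g x) \<in> borel_measurable lborel" using den_meas[OF g] by simp
  have "0 \<le> 1 / den g x" for x
    using inv_den_bounds(1)[OF g, of x] inv_den0_nonneg[of x] by (smt (verit) exp_gt_zero mult_nonneg_nonneg)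
  then show "AE x in lborel. norm (1 / den g x) \<le> norm (exp (2*M) / den0 x)"
    using inv_den_bounds(2)[OF g] inv_den0_nonneg by (intro AE_I2) (simp add: abs_of_nonneg)
qed

lemma integral_inv_den_lower:
  assumes g: "admissible M g"
  shows "exp (-2*M) * J0 \<le> (LBINT x. 1 / den g x)"
proof -
  have "(LBINT x. exp (-2*M) / den0 x) \<le> (LBINT x. 1 / den g x)"
    using inv_den_bounds(1)[OF g] inv_den0_integrable inv_den_integrable[OF g]
    by (intro integral_mono) auto
  then show ?thesis by (simp add: integral_inv_den0)
qed

lemma integral_inv_den_diff:
  assumes g1: "admissible M g1" and g2: "admissible M g2"
    and d: "\<And>t. \<bar>g1 t - g2 t\<bar> \<le> \<delta>"
  shows "\<bar>(LBINT x. 1 / den g1 x) - (LBINT x. 1 / den g2 x)\<bar> \<le> 2 * exp (6*M) * \<delta> * J0"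
proof -
  have i1: "integrable lborel (\<lambda>x. 1 / den g1 x)" by (rule inv_den_integrable[OF g1])
  have i2: "integrable lborel (\<lambda>x. 1 / den g2 x)" by (rule inv_den_integrable[OF g2])
  have "\<bar>(LBINT x. 1 / den g1 x) - (LBINT x. 1 / den g2 x)\<bar>
      = \<bar>LBINT x. 1 / den g1 x - 1 / den g2 x\<bar>"
    using i1 i2 by simp
  also have "\<dots> \<le> (LBINT x. 2 * exp (6*M) * \<delta> / den0 x)"
    using i1 i2 inv_den0_integrable inv_den_diff[OF g1 g2 d]
    by (intro integral_abs_bound_integral) auto
  also have "\<dots> = 2 * exp (6*M) * \<delta> * J0" by (simp add: integral_inv_den0)
  finally show ?thesis .
qed

definition C0 :: real where "C0 = (\<mu> - \<nu>) * pi"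

lemma C0_pos: "0 < C0" unfolding C0_def using nu_less_mu by simp

lemma kappa_eq: "kappa \<mu> \<nu> g = C0 / (LBINT x. 1 / den g x)"
  unfolding kappa_def C0_def den_def by simp

lemma Fd_eq: "Fd \<mu> \<nu> g x = kappa \<mu> \<nu> g * (1 / den g x)"
  unfolding Fd_def den_def by simp

lemma kappa_bounds:
  assumes g: "admissible M g"
  shows "0 \<le> kappa \<mu> \<nu> g" "kappa \<mu> \<nu> g \<le> exp (2*M) * (C0 / J0)"
proof -
  have lo: "exp (-2*M) * J0 \<le> (LBINT x. 1 / den g x)" by (rule integral_inv_den_lower[OF g])
  have pos: "0 < exp (-2*M) * J0" using J0_pos by simp
  show "0 \<le> kappa \<mu> \<nu> g" unfolding kappa_eq using lo pos C0_pos by simp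
  have "C0 / (LBINT x. 1 / den g x) \<le> C0 / (exp (-2*M) * J0)"
    using lo pos C0_pos by (intro divide_left_mono) auto
  also have "\<dots> = exp (2*M) * (C0 / J0)" by (simp add: exp_minus field_simps)
  finally show "kappa \<mu> \<nu> g \<le> exp (2*M) * (C0 / J0)" unfolding kappa_eq .
qed

lemma kappa_diff:
  assumes g1: "admissible M g1" and g2: "admissible M g2"
    and d: "\<And>t. \<bar>g1 t - g2 t\<bar> \<le> \<delta>"
  shows "\<bar>kappa \<mu> \<nu> g1 - kappa \<mu> \<nu> g2\<bar> \<le> 2 * exp (10*M) * \<delta> * (C0 / J0)"
proof -
  have "\<bar>1 / (LBINT x. 1 / den g1 x) - 1 / (LBINT x. 1 / den g2 x)\<bar>
      \<le> (2 * exp (6*M) * \<delta>) / (exp (-2*M) * exp (-2*M) * J0)"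
    using integral_inv_den_lower[OF g1] integral_inv_den_lower[OF g2]
      integral_inv_den_diff[OF g1 g2 d]
    by (intro reciprocal_perturbation J0_pos) (auto simp: mult.commute)
  also have "\<dots> = 2 * exp (10*M) * \<delta> * (1 / J0)"
  proof -
    have "exp (-2*M) * exp (-2*M) * exp (10*M) = exp (6*M)"
      by (simp add: exp_add[symmetric] algebra_simps)
    then show ?thesis using J0_pos by (simp add: field_simps)
  qed
  finally have inv: "\<bar>1 / (LBINT x. 1 / den g1 x) - 1 / (LBINT x. 1 / den g2 x)\<bar>
      \<le> 2 * exp (10*M) * \<delta> * (1 / J0)" .
  have "\<bar>kappa \<mu> \<nu> g1 - kappa \<mu> \<nu> g2\<bar>
      = C0 * \<bar>1 / (LBINT x. 1 / den g1 x) - 1 / (LBINT x. 1 / den g2 x)\<bar>"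
  proof -
    have e: "C0 / a - C0 / b = C0 * (1 / a - 1 / b)" for a b :: real by (simp add: right_diff_distrib)
    show ?thesis unfolding kappa_eq e abs_mult using C0_pos by simp
  qed
  also have "\<dots> \<le> C0 * (2 * exp (10*M) * \<delta> * (1 / J0))"
    using inv C0_pos by (intro mult_left_mono) auto
  finally show ?thesis by (simp add: ac_simps)
qed

definition Fd_const :: "real \<Rightarrow> real" where "Fd_const M = 8 * exp (20*M) * (C0 / J0) * rate_const"

lemma Fd_const_pos: "0 < Fd_const M"
  unfolding Fd_const_def using C0_pos J0_pos rate_const_pos by simp

lemma Fd_diff:
  assumes g1: "admissible M g1" and g2: "admissible M g2"
    and d: "\<And>t. \<bar>g1 t - g2 t\<bar> \<le> \<delta>"
  shows "\<bar>Fd \<mu> \<nu> g1 x - Fd \<mu> \<nu> g2 x\<bar> \<le> Fd_const M * \<delta> * rate x"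
proof -
  have M0: "0 \<le> M" by (rule admissible_nonneg[OF g1])
  have d0: "0 \<le> \<delta>" using d[of 0] by linarith
  define E where "E = 2 * exp (10*M)"
  have E0: "0 \<le> E" unfolding E_def by simp
  have e2: "exp (2*M) \<le> E" unfolding E_def using M0
    by (smt (verit, best) exp_gt_zero exp_le_cancel_iff)
  have e6: "2 * exp (6*M) \<le> E" unfolding E_def using M0 by simp
  have V: "0 \<le> C0 / J0" using C0_pos J0_pos by simp
  have u1: "0 \<le> 1 / den g1 x"
    using inv_den_bounds(1)[OF g1, of x] inv_den0_nonneg[of x]
    by (smt (verit) exp_gt_zero mult_nonneg_nonneg)
  have "\<bar>kappa \<mu> \<nu> g1 * (1 / den g1 x) - kappa \<mu> \<nu> g2 * (1 / den g2 x)\<bar>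
      \<le> 2 * E * E * \<delta> * (C0 / J0) * (1 / den0 x)"
  proof (rule product_perturbation)
    show "\<bar>kappa \<mu> \<nu> g1 - kappa \<mu> \<nu> g2\<bar> \<le> E * \<delta> * (C0 / J0)"
      using kappa_diff[OF g1 g2 d] unfolding E_def by simp
    show "kappa \<mu> \<nu> g2 \<le> E * (C0 / J0)"
      using kappa_bounds(2)[OF g2] e2 V by (meson mult_right_mono order_trans)
    show "1 / den g1 x \<le> E * (1 / den0 x)"
      using inv_den_bounds(2)[OF g1, of x] e2 inv_den0_nonneg[of x]
      by (meson mult_right_mono order_trans)
    show "\<bar>1 / den g1 x - 1 / den g2 x\<bar> \<le> E * \<delta> * (1 / den0 x)"
      using inv_den_diff[OF g1 g2 d, of x] e6 d0 inv_den0_nonneg[of x]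
      by (smt (verit, best) mult_right_mono mult_nonneg_nonneg)
  qed (use E0 V inv_den0_nonneg u1 kappa_bounds(1)[OF g2] in auto)
  also have "\<dots> \<le> 2 * E * E * \<delta> * (C0 / J0) * (rate_const * rate x)"
    using inv_den0_le_rate[of x] E0 d0 V
    by (intro mult_left_mono) (auto simp del: times_divide_eq_right)
  also have "\<dots> = Fd_const M * \<delta> * rate x"
  proof -
    have "exp (20*M) = exp (10*M) * exp (10*M)" by (simp add: exp_add[symmetric])
    then show ?thesis unfolding Fd_const_def E_def by (simp add: ac_simps)
  qed
  finally show ?thesis unfolding Fd_eq .
qed

text \<open>\<open>F'\<close> is integrable with total integral \<open>C0\<close>, so \<open>F\<close> can be written through
  either half-line, and \<open>F\<^sub>1 - F\<^sub>2\<close> is bounded by integrals of the rate over them.\<close>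
lemma Fd_integrable:
  assumes g: "admissible M g"
  shows "integrable lborel (Fd \<mu> \<nu> g)"
proof -
  have "Fd \<mu> \<nu> g = (\<lambda>x. kappa \<mu> \<nu> g * (1 / den g x))" by (rule ext) (rule Fd_eq)
  then show ?thesis using integrable_mult_right[OF inv_den_integrable[OF g]] by simp
qed

lemma Fd_total:
  assumes g: "admissible M g"
  shows "(LBINT x. Fd \<mu> \<nu> g x) = C0"
proof -
  have pos: "0 < (LBINT x. 1 / den g x)"
    using integral_inv_den_lower[OF g] J0_pos by (smt (verit) exp_gt_zero mult_pos_pos)
  have "(LBINT x. Fd \<mu> \<nu> g x) = (LBINT x. kappa \<mu> \<nu> g * (1 / den g x))" by (simp only: Fd_eq)
  also have "\<dots> = kappa \<mu> \<nu> g * (LBINT x. 1 / den g x)" by (rule integral_mult_right_zero)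
  also have "\<dots> = C0" unfolding kappa_eq using pos by simp
  finally show ?thesis .
qed

lemma FF_left_eq:
  assumes g: "admissible M g"
  shows "FF \<mu> \<nu> g x = (LBINT t:{..x}. Fd \<mu> \<nu> g t) - C0"
proof -
  have i: "integrable lborel (Fd \<mu> \<nu> g)" by (rule Fd_integrable[OF g])
  have si: "set_integrable lborel S (Fd \<mu> \<nu> g)" if "S \<in> sets lborel" for S
    using i that unfolding set_integrable_def by (intro integrable_mult_indicator) auto
  have "C0 = (LBINT t:UNIV. Fd \<mu> \<nu> g t)"
    using Fd_total[OF g] i set_integral_space[OF i] by simp
  also have "UNIV = {..x} \<union> {x<..}" by auto
  also have "(LBINT t:{..x} \<union> {x<..}. Fd \<mu> \<nu> g t)
      = (LBINT t:{..x}. Fd \<mu> \<nu> g t) + (LBINT t:{x<..}. Fd \<mu> \<nu> g t)"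
    by (rule set_integral_Un) (auto intro: si)
  finally show ?thesis unfolding FF_def by simp
qed

lemma FF_diff:
  assumes g1: "admissible M g1" and g2: "admissible M g2"
    and d: "\<And>t. \<bar>g1 t - g2 t\<bar> \<le> \<delta>"
  shows "\<bar>FF \<mu> \<nu> g1 x - FF \<mu> \<nu> g2 x\<bar> \<le> Fd_const M * \<delta> * (LBINT t:{x<..}. rate t)"
    "\<bar>FF \<mu> \<nu> g1 x - FF \<mu> \<nu> g2 x\<bar> \<le> Fd_const M * \<delta> * (LBINT t:{..x}. rate t)"
proof -
  note bound = set_integral_diff_le[OF Fd_integrable[OF g1] Fd_integrable[OF g2] rate_integrable]
  have "\<bar>(LBINT t:{x<..}. Fd \<mu> \<nu> g1 t) - (LBINT t:{x<..}. Fd \<mu> \<nu> g2 t)\<bar>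
      \<le> (Fd_const M * \<delta>) * (LBINT t:{x<..}. rate t)"
    by (rule bound) (use Fd_diff[OF g1 g2 d] in auto)
  then show "\<bar>FF \<mu> \<nu> g1 x - FF \<mu> \<nu> g2 x\<bar> \<le> Fd_const M * \<delta> * (LBINT t:{x<..}. rate t)"
    unfolding FF_def by (simp add: abs_minus_commute)
  have "\<bar>(LBINT t:{..x}. Fd \<mu> \<nu> g1 t) - (LBINT t:{..x}. Fd \<mu> \<nu> g2 t)\<bar>
      \<le> (Fd_const M * \<delta>) * (LBINT t:{..x}. rate t)"
    by (rule bound) (use Fd_diff[OF g1 g2 d] in auto)
  then show "\<bar>FF \<mu> \<nu> g1 x - FF \<mu> \<nu> g2 x\<bar> \<le> Fd_const M * \<delta> * (LBINT t:{..x}. rate t)"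
    unfolding FF_left_eq[OF g1] FF_left_eq[OF g2] by simp
qed

text \<open>A single constant serving all three estimates of the theorem.\<close>
definition lip_const :: "real \<Rightarrow> real" where
  "lip_const M = Fd_const M * (1 + rate_total + 1 / (2*\<mu> - 1))"

lemma lip_const_pos: "0 < lip_const M"
proof -
  have "0 < 1 / (2*\<mu> - 1)" using mu by simp
  then have "0 < 1 + rate_total + 1 / (2*\<mu> - 1)" using rate_total_nonneg by linarith
  then show ?thesis unfolding lip_const_def using Fd_const_pos by simp
qed

lemma Fd_lipschitz:
  assumes g1: "admissible M g1" and g2: "admissible M g2"
    and d: "\<And>t. \<bar>g1 t - g2 t\<bar> \<le> \<delta>"
  shows "\<bar>Fd \<mu> \<nu> g1 x - Fd \<mu> \<nu> g2 x\<bar> \<le> lip_const M * \<delta> * rate x"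
proof -
  have "Fd_const M \<le> lip_const M"
    unfolding lip_const_def using Fd_const_pos[of M] rate_total_nonneg mu
    by (simp add: mult_le_cancel_left1)
  then have "Fd_const M * \<delta> * rate x \<le> lip_const M * \<delta> * rate x"
    using d[of 0] rate_nonneg[of x] by (intro mult_right_mono) auto
  then show ?thesis using Fd_diff[OF g1 g2 d, of x] by linarith
qed

text \<open>Uniform bound: the rate integral over a half-line is at most \<open>rate_total\<close>.\<close>
lemma FF_lipschitz:
  assumes g1: "admissible M g1" and g2: "admissible M g2"
    and d: "\<And>t. \<bar>g1 t - g2 t\<bar> \<le> \<delta>"
  shows "\<bar>FF \<mu> \<nu> g1 x - FF \<mu> \<nu> g2 x\<bar> \<le> lip_const M * \<delta>"
proof -
  have d0: "0 \<le> \<delta>" using d[of 0] by linarith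
  have "(LBINT t:{x<..}. rate t) \<le> rate_total" by (rule rate_total_ge) simp
  then have "Fd_const M * \<delta> * (LBINT t:{x<..}. rate t) \<le> Fd_const M * \<delta> * rate_total"
    using Fd_const_pos[of M] d0 by (intro mult_left_mono) auto
  then have "\<bar>FF \<mu> \<nu> g1 x - FF \<mu> \<nu> g2 x\<bar> \<le> Fd_const M * \<delta> * rate_total"
    using FF_diff(1)[OF g1 g2 d, of x] by linarith
  also have "\<dots> \<le> Fd_const M * \<delta> * (1 + rate_total + 1 / (2*\<mu> - 1))"
  proof (rule mult_left_mono)
    have "0 < 1 / (2*\<mu> - 1)" using mu by simp
    then show "rate_total \<le> 1 + rate_total + 1 / (2*\<mu> - 1)" by linarith
  qed (use Fd_const_pos[of M] d0 in simp)
  also have "\<dots> = lip_const M * \<delta>" unfolding lip_const_def by (simp add: ac_simps)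
  finally show ?thesis .
qed

text \<open>Decay for \<open>\<bar>x\<bar> \<ge> 1\<close>: use the half-line not containing 0 and the tail bound.\<close>
lemma FF_lipschitz_tail:
  assumes g1: "admissible M g1" and g2: "admissible M g2"
    and d: "\<And>t. \<bar>g1 t - g2 t\<bar> \<le> \<delta>" and x: "1 \<le> \<bar>x\<bar>"
  shows "\<bar>FF \<mu> \<nu> g1 x - FF \<mu> \<nu> g2 x\<bar> \<le> lip_const M * \<delta> * \<bar>x\<bar> powr (1 - 2*\<mu>)"
proof -
  have d0: "0 \<le> \<delta>" using d[of 0] by linarith
  have K0: "0 \<le> Fd_const M * \<delta>" using Fd_const_pos[of M] d0 by simp
  have "\<bar>FF \<mu> \<nu> g1 x - FF \<mu> \<nu> g2 x\<bar> \<le> Fd_const M * \<delta> * (\<bar>x\<bar> powr (1 - 2*\<mu>) / (2*\<mu> - 1))"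
  proof (cases "0 \<le> x")
    case True
    then have "0 < x" using x by simp
    with True show ?thesis using FF_diff(1)[OF g1 g2 d, of x] rate_tail_right[of x] K0
      by (smt (verit) abs_of_nonneg mult_left_mono)
  next
    case False
    then have "0 < -x" by simp
    with False show ?thesis using FF_diff(2)[OF g1 g2 d, of x] rate_tail_left[of "-x"] K0
      by (smt (verit) abs_of_neg minus_minus mult_left_mono)
  qed
  also have "\<dots> = (Fd_const M * (1 / (2*\<mu> - 1))) * \<delta> * \<bar>x\<bar> powr (1 - 2*\<mu>)" by simp
  also have "\<dots> \<le> lip_const M * \<delta> * \<bar>x\<bar> powr (1 - 2*\<mu>)"
    unfolding lip_const_def using Fd_const_pos[of M] d0 mu rate_total_nonneg
    by (intro mult_right_mono mult_left_mono) auto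
  finally show ?thesis .
qed

end

lemma inX_admissible:
  assumes g: "inX g" and M: "supnorm g \<le> M"
  shows "admissible M g"
proof -
  have "bounded (range g)" using g unfolding inX_def by auto
  then have "bdd_above (range (\<lambda>x. \<bar>g x\<bar>))"
    by (auto simp: bounded_iff intro: bdd_aboveI2)
  then have "\<bar>g t\<bar> \<le> M" for t
    using M cSUP_upper[of t UNIV "\<lambda>x. \<bar>g x\<bar>"] unfolding supnorm_def by simp
  moreover have "g \<in> borel_measurable borel"
    using g unfolding inX_def by (intro borel_measurable_continuous_onI) auto
  ultimately show ?thesis unfolding admissible_def by auto
qed

lemma inX_diff_le_supnorm:
  assumes "inX g1" "inX g2"
  shows "\<bar>g1 t - g2 t\<bar> \<le> supnorm (\<lambda>t. g2 t - g1 t)"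
proof -
  have "\<exists>B. \<forall>x. \<bar>g x\<bar> \<le> B" if "inX g" for g
    using that unfolding inX_def bounded_iff by auto
  then obtain B1 B2 where "\<And>x. \<bar>g1 x\<bar> \<le> B1" "\<And>x. \<bar>g2 x\<bar> \<le> B2"
    using assms by meson
  then have "bdd_above (range (\<lambda>x. \<bar>g2 x - g1 x\<bar>))"
    by (intro bdd_aboveI2[where M="B2 + B1"]) (metis abs_triangle_ineq4 add_mono order_trans)
  then show ?thesis
    using cSUP_upper[of t UNIV "\<lambda>x. \<bar>g2 x - g1 x\<bar>"] unfolding supnorm_def by simp
qed

theorem lemma5p5:
  fixes \<mu> \<nu> M :: real
  assumes "\<mu> > 1/2" and "0 < \<nu>" and "\<nu> < 1/2" and "M > 0"
  shows "\<exists>c>0. \<forall>g1 g2. inX g1 \<longrightarrow> inX g2 \<longrightarrow> supnorm g1 \<le> M \<longrightarrow> supnorm g2 \<le> M \<longrightarrow>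
     (\<forall>x. x \<noteq> 0 \<longrightarrow> \<bar>Fd \<mu> \<nu> g1 x - Fd \<mu> \<nu> g2 x\<bar>
        \<le> c * supnorm (\<lambda>t. g2 t - g1 t) * (1 / (\<bar>x\<bar> powr (2 * \<nu>) * (x\<^sup>2 + 1) powr (\<mu> - \<nu>)))) \<and>
     (\<forall>x. \<bar>x\<bar> \<ge> 1 \<longrightarrow> \<bar>FF \<mu> \<nu> g1 x - FF \<mu> \<nu> g2 x\<bar>
        \<le> c * supnorm (\<lambda>t. g2 t - g1 t) * \<bar>x\<bar> powr (1 - 2 * \<mu>)) \<and>
     (\<forall>x. \<bar>FF \<mu> \<nu> g1 x - FF \<mu> \<nu> g2 x\<bar> \<le> c * supnorm (\<lambda>t. g2 t - g1 t))"
proof -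
  interpret exponents \<mu> \<nu> using assms by unfold_locales auto
  show ?thesis
  proof (intro exI[of _ "lip_const M"] conjI lip_const_pos allI impI)
    fix g1 g2 x
    assume "inX g1" "inX g2" "supnorm g1 \<le> M" "supnorm g2 \<le> M"
    then have g1: "admissible M g1" and g2: "admissible M g2"
      and d: "\<And>t. \<bar>g1 t - g2 t\<bar> \<le> supnorm (\<lambda>t. g2 t - g1 t)"
      by (simp_all add: inX_admissible inX_diff_le_supnorm)
    show "\<bar>Fd \<mu> \<nu> g1 x - Fd \<mu> \<nu> g2 x\<bar> \<le> lip_const M * supnorm (\<lambda>t. g2 t - g1 t) *
        (1 / (\<bar>x\<bar> powr (2 * \<nu>) * (x\<^sup>2 + 1) powr (\<mu> - \<nu>)))" if "x \<noteq> 0"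
      using Fd_lipschitz[OF g1 g2 d] unfolding rate_def .
    show "\<bar>FF \<mu> \<nu> g1 x - FF \<mu> \<nu> g2 x\<bar>
        \<le> lip_const M * supnorm (\<lambda>t. g2 t - g1 t) * \<bar>x\<bar> powr (1 - 2 * \<mu>)" if "1 \<le> \<bar>x\<bar>"
      by (rule FF_lipschitz_tail[OF g1 g2 d that])
    show "\<bar>FF \<mu> \<nu> g1 x - FF \<mu> \<nu> g2 x\<bar> \<le> lip_const M * supnorm (\<lambda>t. g2 t - g1 t)"
      by (rule FF_lipschitz[OF g1 g2 d])
  qed
qed

end
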